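(* Let $n\ge2$, let $X\subset\mathbb{R}^n$ be finite, let $\epsilon>0$ and $A\subset X$. If $r\in\mathbb{N}\cup\{0\}$, then $(\bar A)^r=\operatorname{int}(A)\cup(\partial A)^r$.
   Context: $\mathcal{Q}=\mathcal{Q}(\epsilon)$ is the collection of closed cubes $\{x\in\mathbb{R}^n: j_i\frac{\epsilon}{2\sqrt n}\le x_i\le (j_i+1)\frac{\epsilon}{2\sqrt n},\ i=1,\dots,n\}$, $j\in\mathbb{Z}^n$. For a cube $S\in\mathcal{Q}$ and integer $m\ge0$, $S^m=\{x\in\mathbb{R}^n:\max_i|x_i-s_i|\le m\frac{\epsilon}{2\sqrt n}\text{ for some }s\in S\}$. For $B\subset\mathbb{R}^n$, $\mathcal{I}(B)=\{S\in\mathcal{Q}: S\cap B\ne\emptyset\}$. A cube $S\in\mathcal{I}(A)$ is an interior cube of $A$ if $S^1\cap X\subset A$ and every cube $T\in\mathcal{Q}$ with $T\subset S^1$ lies in $\mathcal{I}(A)$; otherwise $S\in\mathcal{I}(A)$ is a boundary cube of $A$. $\operatorname{int}(A)$ is the union of the interior cubes of $A$, $\partial A$ is the union of the boundary cubes of $A$, and $\bar A=\operatorname{int}(A)\cup\partial A=\bigcup_{S\in\mathcal{I}(A)}S$. For $Y\subset\mathbb{R}^n$ and integer $N\ge0$, the $N$-extension is $Y^N=\bigcup_{S\in\mathcal{I}(Y)}S^N$. *)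

theory Defs
  imports "HOL-Analysis.Analysis"
begin

text \<open>Points of R^n are modelled as real^'n with n = CARD('n).
  Side length of the grid cubes: eps / (2 sqrt n).\<close>

definition grid_side :: "real \<Rightarrow> 'n::finite itself \<Rightarrow> real" where
  "grid_side eps _ = eps / (2 * sqrt (real CARD('n)))"

definition grid_cube :: "real \<Rightarrow> int^'n::finite \<Rightarrow> (real^'n) set" where
  "grid_cube eps j = {x. \<forall>i. real_of_int (j$i) * grid_side eps TYPE('n) \<le> x$i \<and>
                              x$i \<le> (real_of_int (j$i) + 1) * grid_side eps TYPE('n)}"

definition grid_cubes :: "real \<Rightarrow> (real^'n::finite) set set" where
  "grid_cubes eps = range (grid_cube eps)"

definition cube_ext :: "real \<Rightarrow> nat \<Rightarrow> (real^'n::finite) set \<Rightarrow> (real^'n) set" where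
  "cube_ext eps m S = {x. \<exists>s\<in>S. \<forall>i. \<bar>x$i - s$i\<bar> \<le> real m * grid_side eps TYPE('n)}"

definition meeting_cubes :: "real \<Rightarrow> (real^'n::finite) set \<Rightarrow> (real^'n) set set" where
  "meeting_cubes eps B = {S \<in> grid_cubes eps. S \<inter> B \<noteq> {}}"

definition interior_cube :: "real \<Rightarrow> (real^'n::finite) set \<Rightarrow> (real^'n) set \<Rightarrow> (real^'n) set \<Rightarrow> bool" where
  "interior_cube eps X A S \<longleftrightarrow> S \<in> meeting_cubes eps A \<and>
      cube_ext eps 1 S \<inter> X \<subseteq> A \<and>
      (\<forall>T \<in> grid_cubes eps. T \<subseteq> cube_ext eps 1 S \<longrightarrow> T \<in> meeting_cubes eps A)"

definition boundary_cube :: "real \<Rightarrow> (real^'n::finite) set \<Rightarrow> (real^'n) set \<Rightarrow> (real^'n) set \<Rightarrow> bool" where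
  "boundary_cube eps X A S \<longleftrightarrow> S \<in> meeting_cubes eps A \<and> \<not> interior_cube eps X A S"

definition dint :: "real \<Rightarrow> (real^'n::finite) set \<Rightarrow> (real^'n) set \<Rightarrow> (real^'n) set" where
  "dint eps X A = \<Union>{S. interior_cube eps X A S}"

definition dbdry :: "real \<Rightarrow> (real^'n::finite) set \<Rightarrow> (real^'n) set \<Rightarrow> (real^'n) set" where
  "dbdry eps X A = \<Union>{S. boundary_cube eps X A S}"

definition dclos :: "real \<Rightarrow> (real^'n::finite) set \<Rightarrow> (real^'n) set" where
  "dclos eps A = \<Union>(meeting_cubes eps A)"

definition next_ext :: "real \<Rightarrow> nat \<Rightarrow> (real^'n::finite) set \<Rightarrow> (real^'n) set" where
  "next_ext eps N Y = (\<Union>S\<in>meeting_cubes eps Y. cube_ext eps N S)"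

end

theory Submission
  imports Defs
begin

(* Only the inclusion of (A-bar)^r in the right-hand side needs an argument; the other one is
   monotonicity of the extension, as int(A) and the boundary dA both lie in A-bar.
   Let x lie in T^r, where the cube T meets a cube S of I(A). If S is a boundary cube, then T
   meets dA. Otherwise T lies in S^1 and hence meets A; if T is a boundary cube we are done
   again. If T is interior, walk from T to the cube containing x, changing every index by at
   most one per step. Each cube of the walk lies in the 1-extension of an interior predecessor,
   so it meets A: either all cubes of the walk are interior, and x is in int(A), or the first
   boundary cube reached has index distance at most r from the cube of x, and x is in (dA)^r. *)

lemma grid_intervals_meet_imp_index_dist_le:
  fixes s x :: real and j c :: int
  assumes "s > 0"
    and "real_of_int j * s \<le> x" "x \<le> (real_of_int j + 1) * s"
    and "real_of_int c * s \<le> x" "x \<le> (real_of_int c + 1) * s"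
  shows "\<bar>j - c\<bar> \<le> 1"
proof -
  have "real_of_int j * s \<le> (real_of_int c + 1) * s" "real_of_int c * s \<le> (real_of_int j + 1) * s"
    using assms by linarith+
  then have "real_of_int j \<le> real_of_int c + 1" "real_of_int c \<le> real_of_int j + 1"
    using \<open>s > 0\<close> by (simp_all add: mult_le_cancel_right)
  then show ?thesis by linarith
qed

lemma grid_interval_near_point:
  fixes s x :: real and j k :: int
  assumes "s \<ge> 0" and "\<bar>k - j\<bar> \<le> int m"
    and "real_of_int k * s \<le> x" "x \<le> (real_of_int k + 1) * s"
  obtains p where "real_of_int j * s \<le> p" "p \<le> (real_of_int j + 1) * s" "\<bar>x - p\<bar> \<le> real m * s"
proof
  let ?p = "max (real_of_int j * s) (min x ((real_of_int j + 1) * s))"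
  show "real_of_int j * s \<le> ?p" "?p \<le> (real_of_int j + 1) * s"
    using \<open>s \<ge> 0\<close> by (auto simp: algebra_simps)
  have "real_of_int k - real_of_int j \<le> real m" "real_of_int j - real_of_int k \<le> real m"
    using assms(2) by linarith+
  then have "(real_of_int k - real_of_int j) * s \<le> real m * s"
    "(real_of_int j - real_of_int k) * s \<le> real m * s"
    using \<open>s \<ge> 0\<close> by (simp_all add: mult_right_mono)
  then show "\<bar>x - ?p\<bar> \<le> real m * s"
    using assms(3,4) \<open>s \<ge> 0\<close> by (auto simp: algebra_simps abs_if max_def min_def)
qed

lemma grid_interval_of_near_point:
  fixes s x p :: real and j :: int
  assumes "s > 0"
    and "real_of_int j * s \<le> p" "p \<le> (real_of_int j + 1) * s" "\<bar>x - p\<bar> \<le> real m * s"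
  obtains k where "\<bar>k - j\<bar> \<le> int m" "real_of_int k * s \<le> x" "x \<le> (real_of_int k + 1) * s"
proof -
  define t where "t = x / s"
  have x_eq: "x = t * s"
    using \<open>s > 0\<close> by (simp add: t_def)
  have "(real_of_int j - real m) * s \<le> t * s" "t * s \<le> (real_of_int j + 1 + real m) * s"
    using assms(2-4) x_eq by (auto simp: algebra_simps abs_le_iff)
  then have t_lower: "real_of_int j - real m \<le> t" and t_upper: "t \<le> real_of_int j + 1 + real m"
    using \<open>s > 0\<close> by (simp_all add: mult_le_cancel_right)
  \<comment> \<open>The floor needs clamping only when t is exactly the upper end j + 1 + m.\<close>
  define k where "k = min \<lfloor>t\<rfloor> (j + int m)"
  have "\<bar>k - j\<bar> \<le> int m" "real_of_int k \<le> t" "t \<le> real_of_int k + 1"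
    using t_lower t_upper unfolding k_def by linarith+
  then show ?thesis
    using that x_eq \<open>s > 0\<close> by (simp add: mult_right_mono)
qed

lemma grid_side_nonneg: "eps \<ge> 0 \<Longrightarrow> grid_side eps TYPE('n::finite) \<ge> 0"
  unfolding grid_side_def by simp

lemma grid_side_pos: "eps > 0 \<Longrightarrow> grid_side eps TYPE('n::finite) > 0"
  unfolding grid_side_def by simp

lemma grid_cube_nonempty:
  assumes "eps \<ge> 0"
  shows "grid_cube eps (j::int^'n::finite) \<noteq> {}"
proof -
  have "(\<chi> i. real_of_int (j$i) * grid_side eps TYPE('n)) \<in> grid_cube eps j"
    using grid_side_nonneg[OF assms, where 'n='n]
    unfolding grid_cube_def by (auto simp: algebra_simps)
  then show ?thesis by blast
qed

lemma cube_ext_mono: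
  assumes "eps \<ge> 0" and "m \<le> m'" and "S \<subseteq> S'"
  shows "cube_ext eps m S \<subseteq> cube_ext eps m' (S'::(real^'n::finite) set)"
proof
  fix x
  assume "x \<in> cube_ext eps m S"
  then obtain s where "s \<in> S'" "\<forall>i. \<bar>x$i - s$i\<bar> \<le> real m * grid_side eps TYPE('n)"
    using assms(3) unfolding cube_ext_def by blast
  moreover have "real m * grid_side eps TYPE('n) \<le> real m' * grid_side eps TYPE('n)"
    using assms(2) grid_side_nonneg[OF assms(1), where 'n='n] by (simp add: mult_right_mono)
  ultimately show "x \<in> cube_ext eps m' S'"
    unfolding cube_ext_def by (blast intro: order_trans)
qed

lemma subset_cube_ext:
  assumes "eps \<ge> 0"
  shows "S \<subseteq> cube_ext eps m (S::(real^'n::finite) set)"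
proof
  fix x
  assume "x \<in> S"
  moreover have "\<forall>i. \<bar>x$i - x$i\<bar> \<le> real m * grid_side eps TYPE('n)"
    using grid_side_nonneg[OF assms, where 'n='n] by simp
  ultimately show "x \<in> cube_ext eps m S"
    unfolding cube_ext_def by blast
qed

lemma cube_ext_grid_cube:
  fixes j :: "int^'n::finite"
  assumes "eps > 0"
  shows "cube_ext eps m (grid_cube eps j) = (\<Union>k\<in>{k. \<forall>i. \<bar>k$i - j$i\<bar> \<le> int m}. grid_cube eps k)"
proof (intro equalityI subsetI)
  let ?s = "grid_side eps TYPE('n)"
  have s: "?s > 0" using grid_side_pos[OF assms, where 'n='n] .
  fix x
  assume "x \<in> cube_ext eps m (grid_cube eps j)"
  then obtain p where p: "p \<in> grid_cube eps j" "\<forall>i. \<bar>x$i - p$i\<bar> \<le> real m * ?s"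
    unfolding cube_ext_def by blast
  have "\<exists>k. \<bar>k - j$i\<bar> \<le> int m \<and> real_of_int k * ?s \<le> x$i \<and> x$i \<le> (real_of_int k + 1) * ?s" for i
  proof -
    have "real_of_int (j$i) * ?s \<le> p$i" "p$i \<le> (real_of_int (j$i) + 1) * ?s"
      using p(1) unfolding grid_cube_def by auto
    then show ?thesis
      using grid_interval_of_near_point[OF s _ _ p(2)[rule_format]] by blast
  qed
  then obtain k where k: "\<forall>i. \<bar>k i - j$i\<bar> \<le> int m \<and>
      real_of_int (k i) * ?s \<le> x$i \<and> x$i \<le> (real_of_int (k i) + 1) * ?s"
    by metis
  have "x \<in> grid_cube eps (\<chi> i. k i)" "(\<chi> i. k i) \<in> {k. \<forall>i. \<bar>k$i - j$i\<bar> \<le> int m}"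
    using k unfolding grid_cube_def by simp_all
  then show "x \<in> (\<Union>k\<in>{k. \<forall>i. \<bar>k$i - j$i\<bar> \<le> int m}. grid_cube eps k)"
    by blast
next
  let ?s = "grid_side eps TYPE('n)"
  have s: "?s \<ge> 0" using grid_side_pos[OF assms, where 'n='n] by simp
  fix x
  assume "x \<in> (\<Union>k\<in>{k. \<forall>i. \<bar>k$i - j$i\<bar> \<le> int m}. grid_cube eps k)"
  then obtain k where k: "\<forall>i. \<bar>k$i - j$i\<bar> \<le> int m" "x \<in> grid_cube eps k"
    by blast
  have "\<exists>p. real_of_int (j$i) * ?s \<le> p \<and> p \<le> (real_of_int (j$i) + 1) * ?s \<and>
      \<bar>x$i - p\<bar> \<le> real m * ?s" for i
  proof -
    have "real_of_int (k$i) * ?s \<le> x$i" "x$i \<le> (real_of_int (k$i) + 1) * ?s"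
      using k(2) unfolding grid_cube_def by auto
    then show ?thesis
      using grid_interval_near_point[OF s k(1)[rule_format]] by blast
  qed
  then obtain p where p: "\<forall>i. real_of_int (j$i) * ?s \<le> p i \<and>
      p i \<le> (real_of_int (j$i) + 1) * ?s \<and> \<bar>x$i - p i\<bar> \<le> real m * ?s"
    by metis
  have "(\<chi> i. p i) \<in> grid_cube eps j" "\<forall>i. \<bar>x$i - (\<chi> i. p i)$i\<bar> \<le> real m * ?s"
    using p unfolding grid_cube_def by simp_all
  then show "x \<in> cube_ext eps m (grid_cube eps j)"
    unfolding cube_ext_def by blast
qed

lemma intersecting_grid_cubes_subset_cube_ext:
  assumes "eps > 0" and "S \<in> grid_cubes eps" "T \<in> grid_cubes eps" and "T \<inter> S \<noteq> {}"
  shows "T \<subseteq> cube_ext eps 1 (S::(real^'n::finite) set)"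
proof -
  let ?s = "grid_side eps TYPE('n)"
  obtain c k where S: "S = grid_cube eps c" and T: "T = grid_cube eps k"
    using assms(2,3) unfolding grid_cubes_def by blast
  obtain y where y: "y \<in> grid_cube eps k" "y \<in> grid_cube eps c"
    using assms(4) S T by blast
  have "\<bar>k$i - c$i\<bar> \<le> 1" for i
  proof (rule grid_intervals_meet_imp_index_dist_le[OF grid_side_pos[OF assms(1), where 'n='n]])
    show "real_of_int (k$i) * ?s \<le> y$i" "y$i \<le> (real_of_int (k$i) + 1) * ?s"
      "real_of_int (c$i) * ?s \<le> y$i" "y$i \<le> (real_of_int (c$i) + 1) * ?s"
      using y unfolding grid_cube_def by blast+
  qed
  then have "k \<in> {k. \<forall>i. \<bar>k$i - c$i\<bar> \<le> int 1}"
    by simp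
  then show ?thesis
    unfolding S T cube_ext_grid_cube[OF assms(1)] by (rule UN_upper)
qed

lemma mem_grid_cube_floor:
  fixes x :: "real^'n::finite"
  assumes "eps > 0"
  shows "x \<in> grid_cube eps (\<chi> i. \<lfloor>x$i / grid_side eps TYPE('n)\<rfloor>)"
proof -
  let ?s = "grid_side eps TYPE('n)"
  have s: "?s > 0" using grid_side_pos[OF assms, where 'n='n] .
  have floor_scaled: "real_of_int \<lfloor>t\<rfloor> * ?s \<le> t * ?s \<and> t * ?s \<le> (real_of_int \<lfloor>t\<rfloor> + 1) * ?s" for t
    using s by (intro conjI mult_right_mono) linarith+
  have "real_of_int \<lfloor>x$i / ?s\<rfloor> * ?s \<le> x$i \<and> x$i \<le> (real_of_int \<lfloor>x$i / ?s\<rfloor> + 1) * ?s" for i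
    using floor_scaled[of "x$i / ?s"] s by simp
  then show ?thesis
    unfolding grid_cube_def by simp
qed

lemma next_ext_mono:
  assumes "eps \<ge> 0" and "N \<le> M" and "Y \<subseteq> Z"
  shows "next_ext eps N Y \<subseteq> next_ext eps M (Z::(real^'n::finite) set)"
  using cube_ext_mono[OF assms(1,2) order_refl] assms(3)
  unfolding next_ext_def meeting_cubes_def by blast

lemma subset_next_ext:
  assumes "eps > 0"
  shows "Y \<subseteq> next_ext eps N (Y::(real^'n::finite) set)"
proof
  fix y
  assume "y \<in> Y"
  let ?S = "grid_cube eps (\<chi> i. \<lfloor>y$i / grid_side eps TYPE('n)\<rfloor>)"
  have "y \<in> ?S"
    using mem_grid_cube_floor[OF assms] .
  then have "?S \<in> meeting_cubes eps Y" "y \<in> cube_ext eps N ?S"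
    using \<open>y \<in> Y\<close> subset_cube_ext[of eps] assms
    unfolding meeting_cubes_def grid_cubes_def by auto
  then show "y \<in> next_ext eps N Y"
    unfolding next_ext_def by blast
qed

lemma dclos_eq_dint_Un_dbdry: "dclos eps A = dint eps X A \<union> dbdry eps X A"
  unfolding dclos_def dint_def dbdry_def boundary_cube_def interior_cube_def by blast

lemma boundary_cube_meeting_dbdry:
  assumes "eps \<ge> 0" and "boundary_cube eps X A S"
  shows "S \<in> meeting_cubes eps (dbdry eps X A)"
proof -
  have S: "S \<in> grid_cubes eps" "S \<subseteq> dbdry eps X A"
    using assms(2) unfolding boundary_cube_def meeting_cubes_def dbdry_def by blast+
  moreover have "S \<noteq> {}"
    using S(1) grid_cube_nonempty[OF assms(1)] unfolding grid_cubes_def by blast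
  ultimately show ?thesis
    unfolding meeting_cubes_def by blast
qed

lemma grid_cube_near_interior_cube_subset:
  fixes c k :: "int^'n::finite"
  assumes "eps > 0"
  shows "interior_cube eps X A (grid_cube eps c) \<Longrightarrow> \<forall>i. \<bar>k$i - c$i\<bar> \<le> int d \<Longrightarrow>
    grid_cube eps k \<subseteq> dint eps X A \<union> next_ext eps d (dbdry eps X A)"
proof (induction d arbitrary: c)
  case 0
  then have "k = c"
    by (simp add: vec_eq_iff)
  then show ?case
    using "0.prems"(1) unfolding dint_def by blast
next
  case (Suc d)
  define c' where "c' = (\<chi> i. c$i + sgn (k$i - c$i))"
  have k_near_c': "\<forall>i. \<bar>k$i - c'$i\<bar> \<le> int d"
  proof
    fix i
    have "\<bar>k$i - c$i\<bar> \<le> int d + 1"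
      using Suc.prems(2)[rule_format, of i] by simp
    then show "\<bar>k$i - c'$i\<bar> \<le> int d"
      unfolding c'_def by (auto simp: sgn_if abs_if)
  qed
  have "\<forall>i. \<bar>c'$i - c$i\<bar> \<le> int 1"
    unfolding c'_def by (auto simp: sgn_if)
  then have "grid_cube eps c' \<subseteq> cube_ext eps 1 (grid_cube eps c)"
    unfolding cube_ext_grid_cube[OF assms] by blast
  then have c'_meets_A: "grid_cube eps c' \<in> meeting_cubes eps A"
    using Suc.prems(1) unfolding interior_cube_def grid_cubes_def by blast
  have "grid_cube eps k \<subseteq> dint eps X A \<union> next_ext eps d (dbdry eps X A)"
  proof (cases "interior_cube eps X A (grid_cube eps c')")
    case True
    then show ?thesis
      using Suc.IH k_near_c' by blast
  next
    case False
    then have "grid_cube eps c' \<in> meeting_cubes eps (dbdry eps X A)"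
      using c'_meets_A boundary_cube_meeting_dbdry[of eps] assms
      unfolding boundary_cube_def by auto
    moreover have "grid_cube eps k \<subseteq> cube_ext eps d (grid_cube eps c')"
      using k_near_c' unfolding cube_ext_grid_cube[OF assms] by blast
    ultimately show ?thesis
      unfolding next_ext_def by blast
  qed
  also have "\<dots> \<subseteq> dint eps X A \<union> next_ext eps (Suc d) (dbdry eps X A)"
    using next_ext_mono[of eps d "Suc d"] assms by auto
  finally show ?case .
qed

lemma cube_ext_of_meeting_cube_subset:
  assumes "eps > 0" and "T \<in> meeting_cubes eps A"
  shows "cube_ext eps r T \<subseteq> dint eps X A \<union> next_ext eps r (dbdry eps X (A::(real^'n::finite) set))"
proof (cases "interior_cube eps X A T")
  case True
  obtain j where T: "T = grid_cube eps j"
    using assms(2) unfolding meeting_cubes_def grid_cubes_def by blast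
  have "grid_cube eps k \<subseteq> dint eps X A \<union> next_ext eps r (dbdry eps X A)"
    if "\<forall>i. \<bar>k$i - j$i\<bar> \<le> int r" for k
    using grid_cube_near_interior_cube_subset[OF assms(1) True[unfolded T] that] .
  then show ?thesis
    unfolding T cube_ext_grid_cube[OF assms(1)] by blast
next
  case False
  then have "T \<in> meeting_cubes eps (dbdry eps X A)"
    using assms boundary_cube_meeting_dbdry[of eps]
    unfolding boundary_cube_def by auto
  then show ?thesis
    unfolding next_ext_def by blast
qed

lemma meeting_cubes_dclos_subset:
  assumes "eps > 0"
  shows "meeting_cubes eps (dclos eps A)
    \<subseteq> meeting_cubes eps A \<union> meeting_cubes eps (dbdry eps X (A::(real^'n::finite) set))"
proof
  fix T
  assume T: "T \<in> meeting_cubes eps (dclos eps A)"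
  then obtain S where S: "S \<in> meeting_cubes eps A" "T \<inter> S \<noteq> {}"
    unfolding meeting_cubes_def dclos_def by blast
  have "T \<in> grid_cubes eps" "S \<in> grid_cubes eps"
    using T S(1) unfolding meeting_cubes_def by blast+
  show "T \<in> meeting_cubes eps A \<union> meeting_cubes eps (dbdry eps X A)"
  proof (cases "interior_cube eps X A S")
    case True
    moreover have "T \<subseteq> cube_ext eps 1 S"
      using intersecting_grid_cubes_subset_cube_ext assms
        \<open>S \<in> grid_cubes eps\<close> \<open>T \<in> grid_cubes eps\<close> S(2) .
    ultimately show ?thesis
      using \<open>T \<in> grid_cubes eps\<close> unfolding interior_cube_def by blast
  next
    case False
    then have "S \<subseteq> dbdry eps X A"
      using S(1) unfolding dbdry_def boundary_cube_def by blast
    then show ?thesis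
      using \<open>T \<in> grid_cubes eps\<close> S(2) unfolding meeting_cubes_def by blast
  qed
qed

theorem lemma4p3:
  fixes X A :: "(real^'n::finite) set" and eps :: real and r :: nat
  assumes "CARD('n) \<ge> 2" and "finite X" and "eps > 0" and "A \<subseteq> X"
  shows "next_ext eps r (dclos eps A) = dint eps X A \<union> next_ext eps r (dbdry eps X A)"
proof
  show "next_ext eps r (dclos eps A) \<subseteq> dint eps X A \<union> next_ext eps r (dbdry eps X A)"
  proof (unfold next_ext_def[of eps r "dclos eps A"], rule UN_least)
    fix T
    assume "T \<in> meeting_cubes eps (dclos eps A)"
    then consider "T \<in> meeting_cubes eps A" | "T \<in> meeting_cubes eps (dbdry eps X A)"
      using meeting_cubes_dclos_subset[OF \<open>eps > 0\<close>] by blast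
    then show "cube_ext eps r T \<subseteq> dint eps X A \<union> next_ext eps r (dbdry eps X A)"
      using cube_ext_of_meeting_cube_subset[OF \<open>eps > 0\<close>] unfolding next_ext_def by cases blast+
  qed
  have "dint eps X A \<subseteq> next_ext eps r (dclos eps A)"
    using subset_next_ext[OF \<open>eps > 0\<close>, of "dclos eps A" r]
    unfolding dclos_eq_dint_Un_dbdry[of eps A X] by blast
  moreover have "next_ext eps r (dbdry eps X A) \<subseteq> next_ext eps r (dclos eps A)"
    using \<open>eps > 0\<close> unfolding dclos_eq_dint_Un_dbdry[of eps A X] by (intro next_ext_mono) auto
  ultimately show "dint eps X A \<union> next_ext eps r (dbdry eps X A) \<subseteq> next_ext eps r (dclos eps A)"
    by blast
qed

end
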